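(* Let $k,n\in\mathbb{N}$, $N=\{0,\dots,k\}$, and let $\mathcal{M}_n(N)$ be the set of multisets of cardinality $n$ with elements in $N$. For $x\in\mathcal{M}_n(N)$ let $\overrightarrow{x}$ be the non-decreasing sequence of length $n$ listing the elements of $x$, and let $m=(k,k,\dots,k)$ (length $n$). Define $\rho(x)=\mathrm{rank}(m-\overrightarrow{x})$, where $m-\overrightarrow{x}$ is the entrywise difference (a non-increasing sequence over $N$) and $\mathrm{rank}(x_1,\dots,x_n)=\sum_{i=1}^n\binom{n+x_i-i}{x_i-1}$ (with $\binom{a}{-1}=0$). Then $\rho$ is a bijection from $\mathcal{M}_n(N)$ onto an initial segment $\{0,\dots,|\mathcal{M}_n(N)|-1\}$ of $\mathbb{N}_0$ such that for all $x,y\in\mathcal{M}_n(N)$: $x$ is strictly fairer than $y$ (in the maximization sense) iff $\rho(x)<\rho(y)$.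
   Context: Max-min fair comparison for maximization: $x$ is strictly fairer than $y$ iff $\overrightarrow{y}<_{\mathrm{lex}}\overrightarrow{x}$, where $<_{\mathrm{lex}}$ is the strict lexicographic order on sequences of length $n$. *)

theory Defs
  imports Main "HOL-Library.Multiset"
begin

definition Mset_n :: "nat \<Rightarrow> nat \<Rightarrow> nat multiset set" where
  "Mset_n k n = {x. size x = n \<and> set_mset x \<subseteq> {0..k}}"

definition vec :: "nat multiset \<Rightarrow> nat list" where
  "vec x = sorted_list_of_multiset x"

definition lex_less :: "nat list \<Rightarrow> nat list \<Rightarrow> bool" where
  "lex_less xs ys \<longleftrightarrow> (xs, ys) \<in> lexord {(a, b). a < b}"

definition fairer :: "nat multiset \<Rightarrow> nat multiset \<Rightarrow> bool" where
  "fairer x y \<longleftrightarrow> lex_less (vec y) (vec x)"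

text \<open>rank(x_1,...,x_n) = sum_{i=1}^n binom(n + x_i - i, x_i - 1), binom(a,-1) = 0.
  Index i here is 0-based, so the 1-based index is i+1.\<close>
definition rank :: "nat list \<Rightarrow> nat" where
  "rank xs = (\<Sum>i<length xs. if xs ! i = 0 then 0
      else (length xs + xs ! i - (i + 1)) choose (xs ! i - 1))"

definition rho :: "nat \<Rightarrow> nat multiset \<Rightarrow> nat" where
  "rho k x = rank (map (\<lambda>a. k - a) (vec x))"

end

theory Submission
  imports Defs "HOL-Library.List_Lexorder"
begin

text \<open>Via the sorted listing, multisets of size n over {0..k} correspond to sorted lists of
  length n over {0..k}, and "strictly fairer" becomes the reversed lexicographic order on these
  lists. Ranking the elements of a finite linear order by the number of elements above them is
  an order-reversing bijection onto an initial segment of the naturals, so it suffices to show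
  that rank (m - xs) counts the sorted lists lexicographically above xs. Splitting those lists
  by their head, the ones that agree with xs in the head are counted recursively, and the ones
  whose head exceeds the head a of xs are the sorted lists of length n over {a+1..k}; by stars
  and bars there are binom(n + k - a - 1, n) = binom(n + k - a - 1, k - a - 1) of them, which is
  the leading summand of rank (m - xs).\<close>

lemma rank_Nil: "rank [] = 0"
  by (simp add: rank_def)

lemma rank_Cons:
  "rank (a # xs) = (if a = 0 then 0 else (length xs + a) choose (a - 1)) + rank xs"
  unfolding rank_def length_Cons sum.lessThan_Suc_shift by (auto intro!: sum.cong)


definition card_greater :: "'a::linorder set \<Rightarrow> 'a \<Rightarrow> nat" where
  "card_greater A x = card {y \<in> A. x < y}"

lemma card_greater_strict_antimono:
  assumes "finite A" "y \<in> A" "x < y"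
  shows "card_greater A y < card_greater A x"
  unfolding card_greater_def
  using assms by (intro psubset_card_mono) auto

lemma card_greater_less_iff:
  assumes "finite A" "x \<in> A" "y \<in> A"
  shows "card_greater A x < card_greater A y \<longleftrightarrow> y < x"
  using card_greater_strict_antimono[OF assms(1)] assms
  by (metis linorder_neqE order_less_asym)

lemma bij_betw_card_greater:
  assumes "finite A"
  shows "bij_betw (card_greater A) A {0..<card A}"
proof -
  have inj: "inj_on (card_greater A) A"
    by (rule inj_onI) (metis assms card_greater_less_iff less_irrefl linorder_neqE)
  have "card_greater A x < card A" if "x \<in> A" for x
    unfolding card_greater_def using assms that by (intro psubset_card_mono) auto
  then have "card_greater A ` A = {0..<card A}"
    by (intro card_subset_eq) (auto simp: card_image[OF inj])
  with inj show ?thesis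
    by (simp add: bij_betw_def)
qed


definition sorted_lists :: "nat \<Rightarrow> nat \<Rightarrow> nat \<Rightarrow> nat list set" where
  "sorted_lists n lo hi = {xs. length xs = n \<and> sorted xs \<and> set xs \<subseteq> {lo..hi}}"

lemma finite_sorted_lists: "finite (sorted_lists n lo hi)"
  by (rule finite_subset[OF _ finite_lists_length_eq[of "{lo..hi}" n]])
    (auto simp: sorted_lists_def)

lemma length_sorted_lists: "xs \<in> sorted_lists n lo hi \<Longrightarrow> length xs = n"
  by (simp add: sorted_lists_def)

lemma sorted_lists_0: "sorted_lists 0 lo hi = {[]}"
  by (auto simp: sorted_lists_def)

lemma sorted_lists_Suc_empty: "hi < lo \<Longrightarrow> sorted_lists (Suc n) lo hi = {}"
  by (auto simp: sorted_lists_def length_Suc_conv)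

lemma Nil_notin_sorted_lists_Suc [simp]: "[] \<notin> sorted_lists (Suc n) lo hi"
  by (simp add: sorted_lists_def)

lemma Cons_mem_sorted_lists_iff:
  "a # xs \<in> sorted_lists (Suc n) lo hi \<longleftrightarrow> lo \<le> a \<and> a \<le> hi \<and> xs \<in> sorted_lists n a hi"
  by (auto simp: sorted_lists_def)

lemma sorted_lists_Suc:
  assumes "lo \<le> hi"
  shows "sorted_lists (Suc n) lo hi = Cons lo ` sorted_lists n lo hi \<union> sorted_lists (Suc n) (Suc lo) hi"
proof (intro set_eqI)
  fix ys
  show "ys \<in> sorted_lists (Suc n) lo hi
    \<longleftrightarrow> ys \<in> Cons lo ` sorted_lists n lo hi \<union> sorted_lists (Suc n) (Suc lo) hi"
    using assms by (cases ys; cases "hd ys = lo") (auto simp: Cons_mem_sorted_lists_iff)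
qed

lemma card_sorted_lists_Suc:
  assumes "lo \<le> hi"
  shows "card (sorted_lists (Suc n) lo hi)
    = card (sorted_lists n lo hi) + card (sorted_lists (Suc n) (Suc lo) hi)"
  unfolding sorted_lists_Suc[OF assms]
  by (subst card_Un_disjoint)
    (auto simp: finite_sorted_lists card_image Cons_mem_sorted_lists_iff)

lemma card_sorted_lists:
  assumes "lo \<le> hi"
  shows "card (sorted_lists n lo hi) = (n + (hi - lo)) choose n"
  using assms
proof (induction n arbitrary: lo)
  case 0
  then show ?case by (simp add: sorted_lists_0)
next
  case (Suc n)
  from Suc.prems show ?case
  proof (induction lo rule: inc_induct)
    case base
    then show ?case
      using Suc.IH[of hi] by (simp add: card_sorted_lists_Suc sorted_lists_Suc_empty)
  next
    case (step lo)
    then obtain d where "hi - lo = Suc d" "hi - Suc lo = d"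
      by (metis Suc_diff_Suc)
    with step show ?case
      using Suc.IH[of lo] by (simp add: card_sorted_lists_Suc)
  qed
qed

lemma card_sorted_lists_above:
  assumes "a \<le> k"
  shows "card (sorted_lists (Suc n) (Suc a) k)
    = (if k - a = 0 then 0 else (n + (k - a)) choose (k - a - 1))"
proof (cases "a = k")
  case True
  then show ?thesis by (simp add: sorted_lists_Suc_empty)
next
  case False
  then have "Suc n + (k - Suc a) = n + (k - a)"
    using assms by simp
  then have "card (sorted_lists (Suc n) (Suc a) k) = (n + (k - a)) choose Suc n"
    using False assms card_sorted_lists[of "Suc a" k "Suc n"] by simp
  also have "\<dots> = (n + (k - a)) choose (k - a - 1)"
    using False assms by (subst binomial_symmetric) (auto simp: Suc_diff_Suc)
  finally show ?thesis
    using False assms by simp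
qed

lemma greater_sorted_lists_Cons:
  assumes "lo \<le> a" "a \<le> k"
  shows "{ys \<in> sorted_lists (Suc n) lo k. a # xs < ys}
    = Cons a ` {ys \<in> sorted_lists n a k. xs < ys} \<union> sorted_lists (Suc n) (Suc a) k"
proof (intro set_eqI)
  fix ys
  show "ys \<in> {ys \<in> sorted_lists (Suc n) lo k. a # xs < ys}
    \<longleftrightarrow> ys \<in> Cons a ` {ys \<in> sorted_lists n a k. xs < ys} \<union> sorted_lists (Suc n) (Suc a) k"
    using assms by (cases ys) (auto simp: Cons_mem_sorted_lists_iff)
qed

lemma card_greater_sorted_lists:
  assumes "xs \<in> sorted_lists n lo k"
  shows "card_greater (sorted_lists n lo k) xs = rank (map (\<lambda>a. k - a) xs)"
  using assms
proof (induction xs arbitrary: n lo)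
  case Nil
  then show ?case
    by (simp add: sorted_lists_def card_greater_def rank_Nil)
next
  case (Cons a xs)
  then obtain m where n: "n = Suc m"
    by (auto simp: sorted_lists_def)
  with Cons.prems have a: "lo \<le> a" "a \<le> k" and xs: "xs \<in> sorted_lists m a k"
    by (auto simp: Cons_mem_sorted_lists_iff)
  have "card_greater (sorted_lists n lo k) (a # xs)
      = card_greater (sorted_lists m a k) xs + card (sorted_lists (Suc m) (Suc a) k)"
    unfolding card_greater_def n greater_sorted_lists_Cons[OF a]
    by (subst card_Un_disjoint)
      (auto simp: finite_sorted_lists card_image Cons_mem_sorted_lists_iff)
  with Cons.IH[OF xs] xs show ?case
    by (simp add: card_sorted_lists_above[OF a(2)] rank_Cons length_sorted_lists)
qed


lemma lex_less_iff_less: "lex_less xs ys \<longleftrightarrow> xs < ys"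
  by (simp add: lex_less_def list_less_def)

lemma bij_betw_vec_sorted_lists: "bij_betw vec (Mset_n k n) (sorted_lists n 0 k)"
proof (rule bij_betw_byWitness[where f' = mset])
  show "\<forall>x\<in>Mset_n k n. mset (vec x) = x"
    by (simp add: vec_def)
  show "\<forall>xs\<in>sorted_lists n 0 k. vec (mset xs) = xs"
    by (simp add: vec_def sorted_lists_def sorted_sort_id)
  show "vec ` Mset_n k n \<subseteq> sorted_lists n 0 k"
    by (auto simp: vec_def sorted_lists_def Mset_n_def simp flip: size_mset)
  show "mset ` sorted_lists n 0 k \<subseteq> Mset_n k n"
    by (auto simp: sorted_lists_def Mset_n_def)
qed

lemma rho_eq_card_greater:
  assumes "x \<in> Mset_n k n"
  shows "rho k x = card_greater (sorted_lists n 0 k) (vec x)"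
  using assms bij_betw_apply[OF bij_betw_vec_sorted_lists]
  by (simp add: rho_def card_greater_sorted_lists)

theorem theorem4:
  fixes k n :: nat
  shows "bij_betw (rho k) (Mset_n k n) {0..<card (Mset_n k n)} \<and>
    (\<forall>x\<in>Mset_n k n. \<forall>y\<in>Mset_n k n. fairer x y \<longleftrightarrow> rho k x < rho k y)"
proof
  let ?L = "sorted_lists n 0 k"
  have "card (Mset_n k n) = card ?L"
    by (rule bij_betw_same_card[OF bij_betw_vec_sorted_lists])
  then have "bij_betw (card_greater ?L \<circ> vec) (Mset_n k n) {0..<card (Mset_n k n)}"
    using bij_betw_trans[OF bij_betw_vec_sorted_lists bij_betw_card_greater[OF finite_sorted_lists]]
    by simp
  then show "bij_betw (rho k) (Mset_n k n) {0..<card (Mset_n k n)}"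
    by (rule bij_betw_cong[THEN iffD1, rotated]) (simp add: rho_eq_card_greater)
  show "\<forall>x\<in>Mset_n k n. \<forall>y\<in>Mset_n k n. fairer x y \<longleftrightarrow> rho k x < rho k y"
    using bij_betw_apply[OF bij_betw_vec_sorted_lists]
    by (simp add: fairer_def lex_less_iff_less rho_eq_card_greater
        card_greater_less_iff finite_sorted_lists)
qed

end
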